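(* Let $\omega,L_0\in\mathbb{R}\setminus\{0\}$, $C_0>0$, and $a<b$ real with $b-a>\frac{2\pi}{\omega}+\frac{\pi C_0^2}{|L_0|}+2$. Let $u_1,u_2:[a,b]\to\mathbb{C}$ be solutions of $\frac{d^2u}{dx^2}+\omega^2u=0$ with $\mathrm{Im}\big(\frac{du_1}{dx}\bar u_1\big)=\mathrm{Im}\big(\frac{du_2}{dx}\bar u_2\big)=L_0\neq0$, $\sup_{[a,b]}(|u_1|+|u_2|)\le C_0$, and such that $u_1/u_2$ is not constant. Then for any $x_0\in[a,b]$ with $[x_0,x_0+\frac{2\pi}{\omega}+\frac{\pi C_0^2}{|L_0|}]\subset(a,b)$ there exist $\vartheta_2\in[0,2\pi)$, points $x_1<x_2$ in $[x_0,x_0+\frac{2\pi}{\omega}+\frac{\pi C_0^2}{|L_0|}]$, and a $C^1$, piecewise $C^2$ function $\tilde u:[a,b]\to\mathbb{C}$ such that $\frac{d^2\tilde u}{dx^2}+(\omega^2-\tilde V(x))\tilde u=0$, $\tilde u=u_1$ on $[a,x_1]$ and $\tilde u=e^{i\vartheta_2}u_2$ on $[x_2,b]$, where $\tilde V:\mathbb{R}\to[0,\omega^2]$ is $\tilde V=\omega^2$ on $[x_1,x_2]$ and $\tilde V=0$ on $\mathbb{R}\setminus[x_1,x_2]$. *)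

theory Defs
  imports "HOL-Analysis.Analysis"
begin

end

theory Submission
  imports Defs
begin

text \<open>Write \<open>w = |\<omega>|\<close> and \<open>u = A e\<^sup>i\<^sup>w\<^sup>x + B e\<^sup>-\<^sup>i\<^sup>w\<^sup>x\<close>; the flux is
  \<open>Im (u' cnj u) = w (|A|\<^sup>2 - |B|\<^sup>2)\<close>. Conjugating if necessary we may assume it is negative, so
  \<open>|A| < |B|\<close> and \<open>w u / u' = cayley (A / B e\<^sup>2\<^sup>i\<^sup>w\<^sup>x)\<close> runs periodically around a circle in the upper
  half-plane, one circle for each of \<open>u1\<close>, \<open>u2\<close>.
  On \<open>[x1, x2]\<close> the potential cancels \<open>\<omega>\<^sup>2\<close>, so \<open>\<tilde>u\<close> is the tangent line of \<open>u1\<close> at \<open>x1\<close>, and it joins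
  \<open>e\<^sup>i\<^sup>\<theta> u2\<close> in a \<open>C\<^sup>1\<close> way at \<open>x2\<close> iff \<open>u2/u2'(x2) - u1/u1'(x1) = x2 - x1\<close>: equal imaginary parts give
  \<open>|u1'(x1)| = |u2'(x2)|\<close> because \<open>Im (u / u') = -L0 / |u'|\<^sup>2\<close>. Such a real chord of length
  \<open>w (x2 - x1)\<close> between the two circles is found by pairing each point of the smaller circle with the
  point of the larger one at the same height on its right half, and applying the intermediate value
  theorem over one period. Since \<open>|w u / u'| \<le> w C0\<^sup>2 / |L0|\<close>, the chord has length at most
  \<open>2 w C0\<^sup>2 / |L0|\<close>, which keeps \<open>x1, x2\<close> inside the window.\<close>

definition cayley :: "complex \<Rightarrow> complex" where
  "cayley q = \<i> * (1 + q) / (1 - q)"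

lemma Re_cayley: "q \<noteq> 1 \<Longrightarrow> Re (cayley q) = -2 * Im q / (cmod (1 - q))\<^sup>2"
  unfolding cayley_def cmod_power2
  by (cases q) (auto simp: Re_divide field_simps power2_eq_square complex_eq_iff)

lemma Im_cayley: "q \<noteq> 1 \<Longrightarrow> Im (cayley q) = (1 - (cmod q)\<^sup>2) / (cmod (1 - q))\<^sup>2"
  unfolding cayley_def cmod_power2
  by (cases q) (auto simp: Im_divide field_simps power2_eq_square complex_eq_iff)

lemma cayley_inj: "q1 \<noteq> 1 \<Longrightarrow> q2 \<noteq> 1 \<Longrightarrow> cayley q1 = cayley q2 \<Longrightarrow> q1 = q2"
  unfolding cayley_def by (auto simp: field_simps)

lemma cayley_cnj: "cayley (cnj q) = - cnj (cayley q)"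
  unfolding cayley_def by (simp add: complex_cnj_divide)

lemma cmod_1_minus_rcis_sq: "(cmod (1 - complex_of_real r * cis t))\<^sup>2 = 1 + r\<^sup>2 - 2 * r * cos t"
proof -
  have "(cmod (1 - complex_of_real r * cis t))\<^sup>2 = (1 - r * cos t)\<^sup>2 + (r * sin t)\<^sup>2"
    unfolding cmod_power2 by simp
  also have "\<dots> = 1 + r\<^sup>2 - 2 * r * cos t"
    using sin_cos_squared_add[of t] unfolding power2_eq_square by algebra
  finally show ?thesis .
qed

lemma cayley_circle:
  assumes "cmod q < 1"
  shows "(Re (cayley q))\<^sup>2 + (Im (cayley q))\<^sup>2 + 1
           = 2 * ((1 + (cmod q)\<^sup>2) / (1 - (cmod q)\<^sup>2)) * Im (cayley q)"
proof -
  have q1: "q \<noteq> 1" using assms by auto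
  define D where "D = (cmod (1 - q))\<^sup>2"
  define s where "s = (cmod q)\<^sup>2"
  have D: "D > 0" using q1 by (simp add: D_def)
  have s: "s < 1" using assms by (simp add: s_def abs_square_less_1)
  have "D = (1 - Re q)\<^sup>2 + (Im q)\<^sup>2" "s = (Re q)\<^sup>2 + (Im q)\<^sup>2"
    by (simp_all add: D_def s_def cmod_power2)
  then have "4 * (Im q)\<^sup>2 + (1 - s)\<^sup>2 + D\<^sup>2 = 2 * (1 + s) * D"
    unfolding power2_eq_square by algebra
  then show ?thesis
    unfolding Re_cayley[OF q1] Im_cayley[OF q1] D_def[symmetric] s_def[symmetric]
    using D s by (simp add: field_simps power2_eq_square)
qed

lemma Im_cayley_bounds:
  assumes "cmod q \<le> r" "r < 1"
  shows "(1 - r) / (1 + r) \<le> Im (cayley q) \<and> Im (cayley q) \<le> (1 + r) / (1 - r)"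
proof -
  define s where "s = cmod q"
  have s: "0 \<le> s" "s \<le> r" using assms by (auto simp: s_def)
  have lo: "1 - s \<le> cmod (1 - q)" and hi: "cmod (1 - q) \<le> 1 + s"
    using norm_triangle_ineq2[of 1 q] norm_triangle_ineq4[of 1 q] by (auto simp: s_def)
  have pos: "0 < 1 - s" using s assms by linarith
  have "q \<noteq> 1" using pos by (auto simp: s_def)
  then have "Im (cayley q) = (1 - s) * (1 + s) / (cmod (1 - q))\<^sup>2"
    using Im_cayley[of q] by (auto simp: s_def power2_eq_square algebra_simps)
  moreover have "(1 - s) * (1 + s) / (1 + s)\<^sup>2 \<le> (1 - s) * (1 + s) / (cmod (1 - q))\<^sup>2"
    using lo hi pos s by (intro divide_left_mono power_mono mult_pos_pos) auto
  moreover have "(1 - s) * (1 + s) / (cmod (1 - q))\<^sup>2 \<le> (1 - s) * (1 + s) / (1 - s)\<^sup>2"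
    using lo pos s by (intro divide_left_mono power_mono mult_pos_pos) auto
  moreover have "(1 - r) / (1 + r) \<le> (1 - s) / (1 + s)" "(1 + s) / (1 - s) \<le> (1 + r) / (1 - r)"
    using s assms by (simp_all add: field_simps)
  ultimately show ?thesis using pos s by (simp add: power2_eq_square)
qed

text \<open>\<open>r * cis (- arccos (level_cos r q))\<close> is the point of the circle \<open>|z| = r\<close> whose Cayley image
  has the same imaginary part as \<open>cayley q\<close> and lies in the right half-plane.\<close>

definition level_cos :: "real \<Rightarrow> complex \<Rightarrow> real" where
  "level_cos r q = (1 + r\<^sup>2 - (1 - r\<^sup>2) / Im (cayley q)) / (2 * r)"

lemma level_cos_bounded:
  assumes "0 < r" "cmod q \<le> r" "r < 1"
  shows "- 1 \<le> level_cos r q \<and> level_cos r q \<le> 1"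
proof -
  define h where "h = Im (cayley q)"
  have h: "(1 - r) / (1 + r) \<le> h" "h \<le> (1 + r) / (1 - r)"
    using Im_cayley_bounds[OF assms(2,3)] by (auto simp: h_def)
  have "0 < (1 - r) / (1 + r)" using assms by simp
  then have hpos: "0 < h" using h(1) by linarith
  have "(1 - r) * h \<le> 1 + r" "1 - r \<le> (1 + r) * h" using h assms by (simp_all add: field_simps)
  then have "(1 - r) * ((1 - r) * h) \<le> (1 - r) * (1 + r)" "(1 + r) * (1 - r) \<le> (1 + r) * ((1 + r) * h)"
    using assms by (simp_all add: mult_left_mono)
  then have "(1 - r)\<^sup>2 \<le> (1 - r\<^sup>2) / h" "(1 - r\<^sup>2) / h \<le> (1 + r)\<^sup>2"
    using hpos by (simp_all add: field_simps power2_eq_square)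
  then show ?thesis
    unfolding level_cos_def h_def[symmetric] using assms
    by (simp add: field_simps power2_eq_square)
qed

lemma cayley_level_point:
  assumes "0 < r" "cmod q \<le> r" "r < 1"
  defines "q' \<equiv> complex_of_real r * cis (- arccos (level_cos r q))"
  shows "Im (cayley q') = Im (cayley q)" and "Re (cayley q) \<le> Re (cayley q')"
proof -
  define h where "h = Im (cayley q)"
  have c: "- 1 \<le> level_cos r q \<and> level_cos r q \<le> 1" by (rule level_cos_bounded[OF assms(1-3)])
  have "0 < (1 - r) / (1 + r)" using assms by simp
  then have hpos: "0 < h" using Im_cayley_bounds[OF assms(2,3)] unfolding h_def by linarith
  have q'r: "cmod q' = r" using assms(1) by (simp add: q'_def norm_mult)
  have q'1: "q' \<noteq> 1" using q'r assms by auto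
  have "(cmod (1 - q'))\<^sup>2 = 1 + r\<^sup>2 - 2 * r * level_cos r q"
    unfolding q'_def cmod_1_minus_rcis_sq using c by simp
  also have "\<dots> = (1 - r\<^sup>2) / h" using assms(1) by (simp add: level_cos_def h_def)
  finally have D: "(cmod (1 - q'))\<^sup>2 = (1 - r\<^sup>2) / h" .
  have r2: "r\<^sup>2 < 1" using assms by (simp add: abs_square_less_1)
  show Im: "Im (cayley q') = Im (cayley q)"
    unfolding Im_cayley[OF q'1] q'r D h_def[symmetric] using hpos r2 by simp
  have "0 \<le> sin (arccos (level_cos r q))" using c arccos_bounded by (intro sin_ge_zero) auto
  then have "Im q' \<le> 0" using assms(1) by (simp add: q'_def)
  then have Re_nonneg: "0 \<le> Re (cayley q')"
    unfolding Re_cayley[OF q'1] by (simp add: divide_nonpos_nonneg)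
  have "(1 + (cmod q)\<^sup>2) / (1 - (cmod q)\<^sup>2) \<le> (1 + r\<^sup>2) / (1 - r\<^sup>2)"
    using assms r2 power_mono[OF assms(2)] by (simp add: field_simps abs_square_less_1)
  then have "2 * ((1 + (cmod q)\<^sup>2) / (1 - (cmod q)\<^sup>2)) * h \<le> 2 * ((1 + r\<^sup>2) / (1 - r\<^sup>2)) * h"
    using hpos by (intro mult_right_mono mult_left_mono) auto
  moreover have "cmod q < 1" "cmod q' < 1" using assms q'r by auto
  ultimately have "(Re (cayley q))\<^sup>2 \<le> (Re (cayley q'))\<^sup>2"
    using cayley_circle[of q] cayley_circle[of q'] unfolding Im q'r h_def by linarith
  then show "Re (cayley q) \<le> Re (cayley q')" using Re_nonneg by (rule power2_le_imp_le)
qed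

lemma continuous_on_cayley:
  assumes "continuous_on S f" "\<And>x. x \<in> S \<Longrightarrow> cmod (f x) < 1"
  shows "continuous_on S (\<lambda>x. cayley (f x))"
proof -
  have "f x \<noteq> 1" if "x \<in> S" for x using assms(2)[OF that] by auto
  then show ?thesis unfolding cayley_def by (intro continuous_intros assms(1)) auto
qed

lemma continuous_on_level_angle:
  assumes "continuous_on S f" "\<And>x. x \<in> S \<Longrightarrow> cmod (f x) \<le> r" "0 < r" "r < 1"
  shows "continuous_on S (\<lambda>x. arccos (level_cos r (f x)))"
proof -
  have "0 < (1 - r) / (1 + r)" using assms(3,4) by simp
  then have "Im (cayley (f x)) \<noteq> 0" if "x \<in> S" for x
    using Im_cayley_bounds[OF assms(2)[OF that] assms(4)] by linarith
  moreover have "continuous_on S (\<lambda>x. cayley (f x))"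
    using assms by (intro continuous_on_cayley) force+
  ultimately have "continuous_on S (\<lambda>x. level_cos r (f x))"
    unfolding level_cos_def using assms(3) by (intro continuous_intros) auto
  then show ?thesis using level_cos_bounded[OF assms(3) assms(2) assms(4)]
    by (intro continuous_on_arccos) auto
qed

lemma periodic_drift_zero:
  fixes g :: "real \<Rightarrow> real"
  assumes "continuous_on UNIV g" "0 < P" "0 < c" "\<And>x. g (x + P) = g x - c"
  shows "\<exists>K::int. \<exists>x\<in>{x0..x0 + P}. g x + of_int K * c = 0"
proof -
  define K where "K = \<lceil>- g x0 / c\<rceil>"
  have "- g x0 / c \<le> of_int K" "of_int K < - g x0 / c + 1" unfolding K_def by linarith+
  then have "- g x0 \<le> of_int K * c" "of_int K * c < - g x0 + c"
    using assms(3) by (simp_all add: field_simps)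
  then have "0 \<le> g x0 + of_int K * c" "g (x0 + P) + of_int K * c \<le> 0"
    using assms(4)[of x0] by linarith+
  moreover have "continuous_on {x0..x0 + P} (\<lambda>x. g x + of_int K * c)"
    using continuous_on_subset[OF assms(1)] by (intro continuous_intros) auto
  ultimately have "\<exists>x\<ge>x0. x \<le> x0 + P \<and> g x + of_int K * c = 0"
    using assms(2) by (intro IVT2') auto
  then show ?thesis by (meson atLeastAtMost_iff)
qed

text \<open>The times at which the larger orbit passes through \<open>q' x1\<close> form a branch family indexed by
  \<open>K :: int\<close>. The mismatch between \<open>w * (x2 - x1)\<close> and the horizontal gap of the Cayley images
  drops by \<open>pi\<close> over each period \<open>pi / w\<close>, so for a suitable \<open>K\<close> it vanishes in every window.\<close>

lemma level_partner_real_gap: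
  fixes w x0 :: real and Q1 Q2 :: complex
  assumes w: "0 < w" and Q: "cmod Q1 \<le> cmod Q2" "0 < cmod Q2" "cmod Q2 < 1"
  defines "q' x \<equiv> complex_of_real (cmod Q2) * cis (- arccos (level_cos (cmod Q2) (Q1 * cis (2 * w * x))))"
  shows "\<exists>x1 x2. x1 \<in> {x0..x0 + pi / w} \<and> Q2 * cis (2 * w * x2) = q' x1 \<and>
           Re (cayley (q' x1)) - Re (cayley (Q1 * cis (2 * w * x1))) = w * (x2 - x1)"
proof -
  define r where "r = cmod Q2"
  define q where "q x = Q1 * cis (2 * w * x)" for x
  define \<psi> where "\<psi> x = - arccos (level_cos r (q x))" for x
  define g where "g x = (\<psi> x - Arg Q2) / 2 - w * x
                        - (Re (cayley (r * cis (\<psi> x))) - Re (cayley (q x)))" for x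
  have r: "0 < r" "r < 1" and q: "cmod (q x) \<le> r" for x
    using Q by (auto simp: r_def q_def norm_mult)
  have q_periodic: "q (x + pi / w) = q x" for x
    using w by (simp add: q_def distrib_left cis_mult[symmetric])
  have "g (x + pi / w) = g x - pi" for x
    using w unfolding g_def \<psi>_def q_periodic by (simp add: field_simps)
  moreover have "continuous_on UNIV g"
  proof -
    have cq: "continuous_on UNIV q" unfolding q_def by (intro continuous_intros)
    then have "continuous_on UNIV \<psi>"
      unfolding \<psi>_def using q r by (intro continuous_intros continuous_on_level_angle)
    moreover have "cmod (complex_of_real r * cis t) < 1" for t using r by (simp add: norm_mult)
    ultimately show ?thesis
      unfolding g_def using q r
      by (intro continuous_intros continuous_on_cayley cq) (auto intro: le_less_trans)
  qed
  ultimately obtain K :: int and x1 where x1: "x1 \<in> {x0..x0 + pi / w}" "g x1 + of_int K * pi = 0"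
    using periodic_drift_zero[of g "pi / w" pi x0] w by auto
  define x2 where "x2 = (\<psi> x1 - Arg Q2 + 2 * pi * of_int K) / (2 * w)"
  have "Q2 * cis (2 * w * x2) = rcis r (Arg Q2) * cis (\<psi> x1 - Arg Q2 + 2 * pi * of_int K)"
    using w by (simp add: x2_def r_def rcis_cmod_Arg)
  also have "\<dots> = complex_of_real r * cis (\<psi> x1)"
  proof -
    have "cis (Arg Q2) * cis (\<psi> x1 - Arg Q2 + 2 * pi * of_int K) = cis (\<psi> x1 + 2 * pi * of_int K)"
      by (simp add: cis_mult)
    then show ?thesis by (simp add: rcis_def cis_mult[symmetric])
  qed
  also have partner: "\<dots> = q' x1" by (simp add: q'_def \<psi>_def q_def r_def)
  finally have "Q2 * cis (2 * w * x2) = q' x1" .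
  moreover have "Re (cayley (r * cis (\<psi> x1))) - Re (cayley (q x1)) = w * (x2 - x1)"
    using x1(2) w unfolding g_def x2_def by (simp add: field_simps) algebra
  then have "Re (cayley (q' x1)) - Re (cayley (q x1)) = w * (x2 - x1)" by (simp only: partner)
  ultimately show ?thesis using x1(1) unfolding q_def by blast
qed

lemma cayley_orbits_real_chord:
  fixes w x0 :: real and Q1 Q2 :: complex
  assumes w: "0 < w" and Q: "cmod Q1 \<le> cmod Q2" "cmod Q2 < 1" "Q1 \<noteq> Q2"
  shows "\<exists>x1 x2. x1 \<in> {x0..x0 + pi / w} \<and> x1 < x2 \<and>
           cayley (Q2 * cis (2 * w * x2)) - cayley (Q1 * cis (2 * w * x1)) = of_real (w * (x2 - x1))"
proof -
  define q' where "q' x = complex_of_real (cmod Q2) * cis (- arccos (level_cos (cmod Q2) (Q1 * cis (2 * w * x))))"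
    for x
  have "0 < cmod Q2" using Q by auto
  then obtain x1 x2 where x1: "x1 \<in> {x0..x0 + pi / w}" and q2x2: "Q2 * cis (2 * w * x2) = q' x1"
    and Re_diff: "Re (cayley (q' x1)) - Re (cayley (Q1 * cis (2 * w * x1))) = w * (x2 - x1)"
    using level_partner_real_gap[OF w Q(1) _ Q(2)] unfolding q'_def by blast
  have "cmod (Q1 * cis (2 * w * x1)) \<le> cmod Q2" using Q(1) by (simp add: norm_mult)
  from cayley_level_point[OF \<open>0 < cmod Q2\<close> this Q(2)]
  have Im_eq: "Im (cayley (q' x1)) = Im (cayley (Q1 * cis (2 * w * x1)))"
    and Re_le: "Re (cayley (Q1 * cis (2 * w * x1))) \<le> Re (cayley (q' x1))" by (simp_all add: q'_def)
  have "x1 \<noteq> x2"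
  proof
    assume "x1 = x2"
    then have "cayley (q' x1) = cayley (Q1 * cis (2 * w * x1))" using Re_diff Im_eq by (simp add: complex_eq_iff)
    moreover have "cmod (q' x1) < 1" "cmod (Q1 * cis (2 * w * x1)) < 1"
      using Q by (simp_all add: q'_def norm_mult)
    then have "q' x1 \<noteq> 1" "Q1 * cis (2 * w * x1) \<noteq> 1" by auto
    ultimately have "Q2 * cis (2 * w * x1) = Q1 * cis (2 * w * x1)"
      using cayley_inj q2x2 \<open>x1 = x2\<close> by metis
    then show False using Q(3) by simp
  qed
  moreover have "0 \<le> w * (x2 - x1)" using Re_diff Re_le by linarith
  then have "x1 \<le> x2" using w by (simp add: zero_le_mult_iff)
  ultimately have "x1 < x2" by simp
  moreover have "cayley (Q2 * cis (2 * w * x2)) - cayley (Q1 * cis (2 * w * x1)) = of_real (w * (x2 - x1))"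
    using Re_diff Im_eq unfolding q2x2 by (simp add: complex_eq_iff)
  ultimately show ?thesis using x1 by blast
qed

lemma cayley_orbits_real_chord_either:
  fixes w x0 X :: real and Q1 Q2 :: complex
  assumes w: "0 < w" and Q: "cmod Q1 < 1" "cmod Q2 < 1" "Q1 \<noteq> Q2"
  shows "\<exists>x1 x2. x1 < x2 \<and> (x1 \<in> {x0..x0 + pi / w} \<or> x2 \<in> {X - pi / w..X}) \<and>
           cayley (Q2 * cis (2 * w * x2)) - cayley (Q1 * cis (2 * w * x1)) = of_real (w * (x2 - x1))"
proof (cases "cmod Q1 \<le> cmod Q2")
  case True
  then show ?thesis using cayley_orbits_real_chord[OF w True Q(2,3), of x0] by blast
next
  case False
  text \<open>Reflecting \<open>x \<mapsto> -x\<close> and conjugating swaps the roles of the two orbits.\<close>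
  have "cmod (cnj Q2) \<le> cmod (cnj Q1)" "cmod (cnj Q1) < 1" "cnj Q2 \<noteq> cnj Q1"
    using False Q by auto
  then obtain y1 y2 where y: "y1 \<in> {- X..- X + pi / w}" "y1 < y2"
    "cayley (cnj Q1 * cis (2 * w * y2)) - cayley (cnj Q2 * cis (2 * w * y1)) = of_real (w * (y2 - y1))"
    using cayley_orbits_real_chord[OF w] by blast
  have reflect: "cnj Q * cis (2 * w * y) = cnj (Q * cis (2 * w * (- y)))" for Q y
    by (simp add: cis_cnj)
  have "cnj (cayley (Q2 * cis (2 * w * (- y1))) - cayley (Q1 * cis (2 * w * (- y2))))
          = of_real (w * (y2 - y1))"
    using y(3) unfolding reflect cayley_cnj by simp
  then have "cayley (Q2 * cis (2 * w * (- y1))) - cayley (Q1 * cis (2 * w * (- y2)))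
               = of_real (w * (- y1 - - y2))"
    by (metis complex_cnj_cnj complex_cnj_complex_of_real diff_minus_eq_add uminus_add_conv_diff)
  moreover have "- y2 < - y1" "- y1 \<in> {X - pi / w..X}" using y by auto
  ultimately show ?thesis by blast
qed

definition harmonic_solution ::
    "real \<Rightarrow> real set \<Rightarrow> (real \<Rightarrow> complex) \<Rightarrow> (real \<Rightarrow> complex) \<Rightarrow> bool" where
  "harmonic_solution \<omega> S u u' \<longleftrightarrow>
     (\<forall>x\<in>S. (u has_vector_derivative u' x) (at x within S) \<and>
            (u' has_vector_derivative - (complex_of_real (\<omega>\<^sup>2) * u x)) (at x within S))"

lemma harmonic_solution_abs: "harmonic_solution \<bar>\<omega>\<bar> S u u' = harmonic_solution \<omega> S u u'"
  by (simp add: harmonic_solution_def)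

lemma harmonic_solution_cnj:
  "harmonic_solution \<omega> S u u' \<Longrightarrow> harmonic_solution \<omega> S (\<lambda>x. cnj (u x)) (\<lambda>x. cnj (u' x))"
  unfolding harmonic_solution_def using has_vector_derivative_cnj by fastforce

lemma has_vector_derivative_cis_linear:
  "((\<lambda>x. cis (k * x)) has_vector_derivative (\<i> * of_real k * cis (k * x))) (at x within S)"
proof -
  have "((\<lambda>x. cis (k * x)) has_derivative (\<lambda>t. (k * t) *\<^sub>R (\<i> * cis (k * x)))) (at x within S)"
    by (intro has_derivative_cis derivative_intros)
  then show ?thesis unfolding has_vector_derivative_def
    by (rule has_derivative_eq_rhs) (auto simp: scaleR_conv_of_real algebra_simps)
qed

text \<open>The coefficients are read off the first integrals \<open>(w u \<mp> \<i> u') e\<^sup>\<mp>\<^sup>\<i>\<^sup>w\<^sup>x\<close>,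
  which have derivative zero.\<close>

lemma harmonic_solution_exp_form:
  fixes u u' :: "real \<Rightarrow> complex" and w a b :: real
  assumes w: "w \<noteq> 0" and u: "harmonic_solution w {a..b} u u'"
  obtains A B where "\<And>x. x \<in> {a..b} \<Longrightarrow> u x = A * cis (w * x) + B * cis (- w * x)"
    and "\<And>x. x \<in> {a..b} \<Longrightarrow> u' x = \<i> * of_real w * (A * cis (w * x) - B * cis (- w * x))"
proof -
  have d1: "(u has_vector_derivative u' x) (at x within {a..b})"
    and d2: "(u' has_vector_derivative - (of_real (w\<^sup>2) * u x)) (at x within {a..b})"
    if "x \<in> {a..b}" for x using u that by (auto simp: harmonic_solution_def)
  define FA where "FA x = (of_real w * u x - \<i> * u' x) * cis (- w * x)" for x
  define FB where "FB x = (of_real w * u x + \<i> * u' x) * cis (w * x)" for x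
  have "(FA has_vector_derivative 0) (at x within {a..b})" if "x \<in> {a..b}" for x
    unfolding FA_def
    by (rule derivative_eq_intros d1[OF that] d2[OF that] has_vector_derivative_cis_linear refl)+
       (simp add: algebra_simps power2_eq_square)
  then obtain cA where cA: "\<And>x. x \<in> {a..b} \<Longrightarrow> FA x = cA"
    using has_vector_derivative_zero_constant[of "{a..b}" FA] by auto
  have "(FB has_vector_derivative 0) (at x within {a..b})" if "x \<in> {a..b}" for x
    unfolding FB_def
    by (rule derivative_eq_intros d1[OF that] d2[OF that] has_vector_derivative_cis_linear refl)+
       (simp add: algebra_simps power2_eq_square)
  then obtain cB where cB: "\<And>x. x \<in> {a..b} \<Longrightarrow> FB x = cB"
    using has_vector_derivative_zero_constant[of "{a..b}" FB] by auto
  have wne: "complex_of_real w \<noteq> 0" using w by simp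
  have inv: "cis (w * x) * cis (- w * x) = 1" for x by (simp add: cis_mult)
  have "u x = cA / (2 * of_real w) * cis (w * x) + cB / (2 * of_real w) * cis (- w * x) \<and>
        u' x = \<i> * of_real w * (cA / (2 * of_real w) * cis (w * x) - cB / (2 * of_real w) * cis (- w * x))"
    if "x \<in> {a..b}" for x
  proof -
    have "of_real w * u x - \<i> * u' x = cA * cis (w * x)"
      and "of_real w * u x + \<i> * u' x = cB * cis (- w * x)"
      using cA[OF that] cB[OF that] inv[of x] unfolding FA_def FB_def
      by (metis mult.assoc mult.commute mult_1_right)+
    then have "2 * of_real w * u x = cA * cis (w * x) + cB * cis (- w * x)"
      and "2 * u' x = \<i> * (cA * cis (w * x) - cB * cis (- w * x))"
      using complex_i_mult_minus[of "u' x"] by algebra+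
    then have u: "u x = (cA * cis (w * x) + cB * cis (- w * x)) / (2 * of_real w)"
      and u': "u' x = \<i> * (cA * cis (w * x) - cB * cis (- w * x)) / 2"
      using wne by (simp_all add: eq_divide_eq ac_simps)
    show ?thesis unfolding u u' using wne by (simp add: field_simps)
  qed
  then show ?thesis using that by blast
qed

lemma Im_deriv_cnj_exp_form:
  fixes A B :: complex and w x :: real
  shows "Im (\<i> * of_real w * (A * cis (w * x) - B * cis (- w * x)) * cnj (A * cis (w * x) + B * cis (- w * x)))
         = w * ((cmod A)\<^sup>2 - (cmod B)\<^sup>2)"
proof -
  define c where "c = cis (w * x)"
  define d where "d = cis (- w * x)"
  have cd: "c * d = 1" and cnj_cd: "cnj c = d" "cnj d = c"
    by (simp_all add: c_def d_def cis_mult cis_cnj)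
  define Z where "Z = A * cnj B * c * c"
  have "(A * c - B * d) * (cnj A * d + cnj B * c) = (A * cnj A - B * cnj B) + (Z - cnj Z)"
    using cd unfolding Z_def by (simp add: cnj_cd) algebra
  moreover have "A * cnj A - B * cnj B = of_real ((cmod A)\<^sup>2 - (cmod B)\<^sup>2)"
    unfolding of_real_diff complex_norm_square ..
  ultimately have "\<i> * of_real w * (A * c - B * d) * cnj (A * c + B * d)
                     = \<i> * of_real w * (of_real ((cmod A)\<^sup>2 - (cmod B)\<^sup>2) + (Z - cnj Z))"
    by (simp add: cnj_cd mult.assoc)
  moreover have "Im (\<i> * of_real w * (of_real ((cmod A)\<^sup>2 - (cmod B)\<^sup>2) + (Z - cnj Z)))
                   = w * ((cmod A)\<^sup>2 - (cmod B)\<^sup>2)"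
    by simp
  ultimately show ?thesis unfolding c_def d_def by (simp only:)
qed

lemma cayley_exp_form:
  fixes A B :: complex and w x :: real
  assumes "cmod A < cmod B" "w \<noteq> 0"
  shows "cayley (A / B * cis (2 * w * x))
           = of_real w * (A * cis (w * x) + B * cis (- w * x)) / (\<i> * of_real w * (A * cis (w * x) - B * cis (- w * x)))"
proof -
  define c where "c = cis (w * x)"
  have c0: "c \<noteq> 0" and d: "cis (- w * x) = inverse c"
    by (simp_all add: c_def cis_inverse[symmetric] del: cis_inverse)
  have c2: "cis (2 * w * x) = c * c" by (simp add: c_def cis_mult mult.assoc)
  have "cmod (A * c * c) = cmod A" by (simp add: c_def norm_mult)
  then have ne: "A * c * c \<noteq> B" using assms(1) by auto
  have "B \<noteq> 0" using assms(1) by auto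
  then show ?thesis
    unfolding d c2 c_def[symmetric] cayley_def using c0 ne assms(2)
    by (simp add: field_simps)
qed

lemma cmod_ratio_le:
  fixes v v' :: complex and L C w :: real
  assumes "Im (v' * cnj v) = L" "L \<noteq> 0" "cmod v \<le> C" "0 < w"
  shows "cmod (of_real w * v / v') \<le> w * C\<^sup>2 / \<bar>L\<bar>"
proof -
  have "\<bar>L\<bar> \<le> cmod v * cmod v'"
    using abs_Im_le_cmod[of "v' * cnj v"] assms(1) by (simp add: norm_mult mult.commute)
  moreover have L: "0 < \<bar>L\<bar>" using assms(2) by simp
  ultimately have v: "0 < cmod v" "0 < cmod v'" by (auto simp: zero_less_mult_iff)
  have "cmod v / cmod v' \<le> (cmod v)\<^sup>2 / \<bar>L\<bar>"
    using \<open>\<bar>L\<bar> \<le> cmod v * cmod v'\<close> v L by (simp add: field_simps power2_eq_square mult_right_mono)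
  also have "\<dots> \<le> C\<^sup>2 / \<bar>L\<bar>" using assms(3) v by (intro divide_right_mono power_mono) auto
  finally have "w * (cmod v / cmod v') \<le> w * (C\<^sup>2 / \<bar>L\<bar>)" using assms(4) by (intro mult_left_mono) auto
  then show ?thesis using assms(4) by (simp add: norm_mult norm_divide)
qed

lemma Im_div_deriv:
  fixes v v' :: complex
  assumes "Im (v' * cnj v) = L" "v' \<noteq> 0"
  shows "Im (v / v') = - L / (cmod v')\<^sup>2"
proof -
  have "v / v' = v * cnj v' / of_real ((cmod v')\<^sup>2)"
    unfolding complex_norm_square using assms(2) by (simp add: field_simps)
  moreover have "Im (v * cnj v') = - L"
    using arg_cong[OF assms(1), of uminus] by (simp add: algebra_simps)
  ultimately show ?thesis by (simp add: Im_divide_of_real)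
qed

text \<open>The tangent line of \<open>u1\<close> at \<open>x1\<close> meets \<open>p * u2\<close> at \<open>x2\<close> to first order; this is what
  allows the two solutions to be joined through the flat piece \<open>\<tilde>V = \<omega>\<^sup>2\<close> on \<open>[x1, x2]\<close>.\<close>

definition linear_bridge ::
    "(real \<Rightarrow> complex) \<Rightarrow> (real \<Rightarrow> complex) \<Rightarrow> (real \<Rightarrow> complex) \<Rightarrow> (real \<Rightarrow> complex)
       \<Rightarrow> real \<Rightarrow> real \<Rightarrow> complex \<Rightarrow> bool" where
  "linear_bridge u1 u1' u2 u2' x1 x2 p \<longleftrightarrow>
     u1' x1 = p * u2' x2 \<and> u1 x1 + of_real (x2 - x1) * u1' x1 = p * u2 x2"

lemma linear_bridge_cnj:
  "linear_bridge u1 u1' u2 u2' x1 x2 p \<Longrightarrow>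
   linear_bridge (\<lambda>x. cnj (u1 x)) (\<lambda>x. cnj (u1' x)) (\<lambda>x. cnj (u2 x)) (\<lambda>x. cnj (u2' x)) x1 x2 (cnj p)"
  unfolding linear_bridge_def by (metis complex_cnj_add complex_cnj_complex_of_real complex_cnj_mult)

lemma linear_bridge_of_ratio:
  fixes v1 v1' v2 v2' :: complex and d L :: real
  assumes "Im (v1' * cnj v1) = L" "Im (v2' * cnj v2) = L" "L \<noteq> 0"
    and "v2 / v2' - v1 / v1' = of_real d"
  shows "\<exists>p. cmod p = 1 \<and> v1' = p * v2' \<and> v1 + of_real d * v1' = p * v2"
proof -
  have ne: "v1' \<noteq> 0" "v2' \<noteq> 0" using assms(1-3) by auto
  have "Im (v2 / v2') = Im (v1 / v1')" using arg_cong[OF assms(4), of Im] by simp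
  then have "- L / (cmod v2')\<^sup>2 = - L / (cmod v1')\<^sup>2"
    using Im_div_deriv[OF assms(1) ne(1)] Im_div_deriv[OF assms(2) ne(2)] by simp
  then have "cmod v1' = cmod v2'" using assms(3) ne by (simp add: field_simps power2_eq_iff_nonneg)
  moreover have "v2 = v2' * (v1 / v1' + of_real d)" using assms(4) ne by (simp add: field_simps)
  ultimately show ?thesis using ne
    by (intro exI[of _ "v1' / v2'"]) (auto simp: norm_divide field_simps)
qed

lemma harmonic_solution_cayley_form:
  fixes u u' :: "real \<Rightarrow> complex" and w L :: real
  assumes w: "0 < w" and u: "harmonic_solution w {a..b} u u'" and "a \<le> b"
    and L: "\<And>x. x \<in> {a..b} \<Longrightarrow> Im (u' x * cnj (u x)) = L" "L < 0"
  obtains A B where "cmod A < cmod B"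
    and "\<And>x. x \<in> {a..b} \<Longrightarrow> u x = A * cis (w * x) + B * cis (- w * x)"
    and "\<And>x. x \<in> {a..b} \<Longrightarrow> cayley (A / B * cis (2 * w * x)) = of_real w * u x / u' x"
proof -
  obtain A B where AB: "\<And>x. x \<in> {a..b} \<Longrightarrow> u x = A * cis (w * x) + B * cis (- w * x)"
    "\<And>x. x \<in> {a..b} \<Longrightarrow> u' x = \<i> * of_real w * (A * cis (w * x) - B * cis (- w * x))"
    using harmonic_solution_exp_form[OF _ u] w by (metis less_irrefl)
  have "a \<in> {a..b}" using \<open>a \<le> b\<close> by simp
  from L(1)[OF this] have "L = w * ((cmod A)\<^sup>2 - (cmod B)\<^sup>2)"
    unfolding AB[OF \<open>a \<in> {a..b}\<close>] Im_deriv_cnj_exp_form by simp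
  then have "(cmod A)\<^sup>2 < (cmod B)\<^sup>2" using L(2) w by (simp add: mult_less_0_iff)
  then have lt: "cmod A < cmod B" by (rule power_less_imp_less_base) simp
  show ?thesis
  proof (rule that[OF lt AB(1)])
    fix x assume "x \<in> {a..b}"
    then show "cayley (A / B * cis (2 * w * x)) = of_real w * u x / u' x"
      using cayley_exp_form[OF lt, of w x] w AB by simp
  qed
qed

lemma cis_shift_into_period:
  fixes w x x0 :: real
  assumes "0 < w"
  shows "\<exists>y\<in>{x0..x0 + pi / w}. cis (2 * w * y) = cis (2 * w * x)"
proof -
  define n where "n = \<lfloor>(x - x0) * w / pi\<rfloor>"
  define y where "y = x - of_int n * pi / w"
  have "of_int n * pi \<le> (x - x0) * w" "(x - x0) * w < (of_int n + 1) * pi"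
    using floor_divide_lower[of pi "(x - x0) * w"] floor_divide_upper[of pi "(x - x0) * w"]
    by (simp_all add: n_def)
  then have "of_int n * pi / w \<le> x - x0" "x - x0 \<le> of_int n * pi / w + pi / w"
    using assms by (simp_all add: pos_divide_le_eq pos_le_divide_eq field_simps)
  then have "y \<in> {x0..x0 + pi / w}" by (simp add: y_def)
  moreover have "2 * w * x = 2 * w * y + 2 * pi * of_int n"
    using assms by (simp add: y_def field_simps)
  then have "cis (2 * w * y) = cis (2 * w * x)" by (simp add: cis_mult[symmetric])
  ultimately show ?thesis by blast
qed

lemma cayley_orbit_bounded:
  fixes u u' :: "real \<Rightarrow> complex" and w L C x :: real
  assumes w: "0 < w" and window: "{x0..x0 + pi / w} \<subseteq> {a..b}"
    and Q: "\<And>x. x \<in> {a..b} \<Longrightarrow> cayley (Q * cis (2 * w * x)) = of_real w * u x / u' x"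
    and L: "\<And>x. x \<in> {a..b} \<Longrightarrow> Im (u' x * cnj (u x)) = L" "L \<noteq> 0"
    and C: "\<And>x. x \<in> {a..b} \<Longrightarrow> cmod (u x) \<le> C"
  shows "cmod (cayley (Q * cis (2 * w * x))) \<le> w * C\<^sup>2 / \<bar>L\<bar>"
proof -
  obtain y where y: "y \<in> {x0..x0 + pi / w}" "cis (2 * w * y) = cis (2 * w * x)"
    using cis_shift_into_period[OF w] by blast
  then have "y \<in> {a..b}" using window by blast
  then show ?thesis using cmod_ratio_le[OF L(1) L(2) C w] Q y(2) by metis
qed

lemma exp_form_ratio_neq:
  fixes u1 u2 :: "real \<Rightarrow> complex"
  assumes u1: "\<And>x. x \<in> S \<Longrightarrow> u1 x = A1 * cis (w * x) + B1 * cis (- w * x)"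
    and u2: "\<And>x. x \<in> S \<Longrightarrow> u2 x = A2 * cis (w * x) + B2 * cis (- w * x)"
    and "B1 \<noteq> 0" "B2 \<noteq> 0" "\<And>x. x \<in> S \<Longrightarrow> u2 x \<noteq> 0"
    and "\<not> (\<exists>c. \<forall>x\<in>S. u1 x / u2 x = c)"
  shows "A1 / B1 \<noteq> A2 / B2"
proof
  assume "A1 / B1 = A2 / B2"
  then have A1: "A1 = A2 / B2 * B1" using assms(3,4) by (simp add: field_simps)
  have "u1 x = B1 / B2 * u2 x" if "x \<in> S" for x
    unfolding u1[OF that] u2[OF that] A1 using assms(4) by (simp add: field_simps)
  then have "u1 x / u2 x = B1 / B2" if "x \<in> S" for x using assms(5) that by simp
  then show False using assms(6) by blast
qed

lemma real_chord_le:
  fixes z1 z2 :: complex and w M t :: real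
  assumes "z2 - z1 = of_real (w * t)" "cmod z1 \<le> M" "cmod z2 \<le> M" "0 < w"
  shows "t \<le> 2 * M / w"
proof -
  have "w * t = Re (z2 - z1)" using assms(1) by simp
  also have "\<dots> \<le> cmod z2 + cmod z1"
    using complex_Re_le_cmod norm_triangle_ineq4 order_trans by blast
  also have "\<dots> \<le> 2 * M" using assms(2,3) by simp
  finally show ?thesis using assms(4) by (simp add: field_simps)
qed

lemma harmonic_pair_cayley_orbits:
  fixes u1 u1' u2 u2' :: "real \<Rightarrow> complex" and w L :: real
  assumes w: "0 < w" and "a \<le> b"
    and u1: "harmonic_solution w {a..b} u1 u1'" and u2: "harmonic_solution w {a..b} u2 u2'"
    and L1: "\<And>x. x \<in> {a..b} \<Longrightarrow> Im (u1' x * cnj (u1 x)) = L"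
    and L2: "\<And>x. x \<in> {a..b} \<Longrightarrow> Im (u2' x * cnj (u2 x)) = L"
    and L: "L < 0" and nonconst: "\<not> (\<exists>c. \<forall>x\<in>{a..b}. u1 x / u2 x = c)"
  obtains Q1 Q2 where "cmod Q1 < 1" "cmod Q2 < 1" "Q1 \<noteq> Q2"
    and "\<And>x. x \<in> {a..b} \<Longrightarrow> cayley (Q1 * cis (2 * w * x)) = of_real w * u1 x / u1' x"
    and "\<And>x. x \<in> {a..b} \<Longrightarrow> cayley (Q2 * cis (2 * w * x)) = of_real w * u2 x / u2' x"
proof -
  obtain A1 B1 where AB1: "cmod A1 < cmod B1" "\<And>x. x \<in> {a..b} \<Longrightarrow> u1 x = A1 * cis (w * x) + B1 * cis (- w * x)"
      "\<And>x. x \<in> {a..b} \<Longrightarrow> cayley (A1 / B1 * cis (2 * w * x)) = of_real w * u1 x / u1' x"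
    using harmonic_solution_cayley_form[OF w u1 \<open>a \<le> b\<close> L1 L] by blast
  obtain A2 B2 where AB2: "cmod A2 < cmod B2" "\<And>x. x \<in> {a..b} \<Longrightarrow> u2 x = A2 * cis (w * x) + B2 * cis (- w * x)"
      "\<And>x. x \<in> {a..b} \<Longrightarrow> cayley (A2 / B2 * cis (2 * w * x)) = of_real w * u2 x / u2' x"
    using harmonic_solution_cayley_form[OF w u2 \<open>a \<le> b\<close> L2 L] by blast
  have "u2 x \<noteq> 0" if "x \<in> {a..b}" for x using L2[OF that] L by auto
  then have "A1 / B1 \<noteq> A2 / B2"
    using AB1(1) AB2(1) by (intro exp_form_ratio_neq[OF AB1(2) AB2(2) _ _ _ nonconst]) auto
  moreover have "cmod (A1 / B1) < 1" "cmod (A2 / B2) < 1"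
    using AB1(1) AB2(1) by (auto simp: norm_divide divide_less_eq)
  ultimately show ?thesis using that AB1(3) AB2(3) by blast
qed

lemma linear_bridge_exists_neg:
  fixes \<omega> L0 C0 x0 :: real and u1 u1' u2 u2' :: "real \<Rightarrow> complex"
  defines "T \<equiv> 2 * pi / \<bar>\<omega>\<bar> + pi * C0\<^sup>2 / \<bar>L0\<bar>"
  assumes "\<omega> \<noteq> 0" and L0: "L0 < 0"
    and u1: "harmonic_solution \<omega> {a..b} u1 u1'" and u2: "harmonic_solution \<omega> {a..b} u2 u2'"
    and L1: "\<And>x. x \<in> {a..b} \<Longrightarrow> Im (u1' x * cnj (u1 x)) = L0"
    and L2: "\<And>x. x \<in> {a..b} \<Longrightarrow> Im (u2' x * cnj (u2 x)) = L0"
    and bound: "\<And>x. x \<in> {a..b} \<Longrightarrow> cmod (u1 x) + cmod (u2 x) \<le> C0"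
    and nonconst: "\<not> (\<exists>c. \<forall>x\<in>{a..b}. u1 x / u2 x = c)"
    and window: "{x0..x0 + T} \<subseteq> {a..b}"
  shows "\<exists>x1 x2 p. x1 < x2 \<and> x1 \<in> {x0..x0 + T} \<and> x2 \<in> {x0..x0 + T} \<and> cmod p = 1 \<and>
                   linear_bridge u1 u1' u2 u2' x1 x2 p"
proof -
  define w where "w = \<bar>\<omega>\<bar>"
  define d where "d = 2 * C0\<^sup>2 / \<bar>L0\<bar>"
  have w: "0 < w" using \<open>\<omega> \<noteq> 0\<close> by (simp add: w_def)
  have "0 \<le> d" "d \<le> pi * C0\<^sup>2 / \<bar>L0\<bar>" "pi / w \<le> 2 * pi / w"
    using pi_gt3 w by (auto simp: d_def intro!: divide_right_mono mult_right_mono)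
  then have T: "0 \<le> d" "pi / w + d \<le> T" using w by (auto simp: T_def w_def)
  moreover have "0 < pi / w" using w by simp
  ultimately have "x0 \<in> {a..b}" and period_window: "{x0..x0 + pi / w} \<subseteq> {a..b}"
    using window by auto
  then have "a \<le> b" by simp
  have "harmonic_solution w {a..b} u1 u1'" "harmonic_solution w {a..b} u2 u2'"
    using u1 u2 by (simp_all add: w_def harmonic_solution_abs)
  then obtain Q1 Q2 where Q: "cmod Q1 < 1" "cmod Q2 < 1" "Q1 \<noteq> Q2"
    and Q1: "\<And>x. x \<in> {a..b} \<Longrightarrow> cayley (Q1 * cis (2 * w * x)) = of_real w * u1 x / u1' x"
    and Q2: "\<And>x. x \<in> {a..b} \<Longrightarrow> cayley (Q2 * cis (2 * w * x)) = of_real w * u2 x / u2' x"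
    using harmonic_pair_cayley_orbits[OF w \<open>a \<le> b\<close> _ _ L1 L2 L0 nonconst] by blast
  then obtain x1 x2 where x12: "x1 < x2" "x1 \<in> {x0..x0 + pi / w} \<or> x2 \<in> {x0 + T - pi / w..x0 + T}"
    and chord: "cayley (Q2 * cis (2 * w * x2)) - cayley (Q1 * cis (2 * w * x1)) = of_real (w * (x2 - x1))"
    using cayley_orbits_real_chord_either[OF w] by blast
  have C1: "cmod (u1 x) \<le> C0" and C2: "cmod (u2 x) \<le> C0" if "x \<in> {a..b}" for x
    using bound[OF that] norm_ge_zero[of "u1 x"] norm_ge_zero[of "u2 x"] by linarith+
  have "cmod (cayley (Q1 * cis (2 * w * x))) \<le> w * C0\<^sup>2 / \<bar>L0\<bar>"
    "cmod (cayley (Q2 * cis (2 * w * x))) \<le> w * C0\<^sup>2 / \<bar>L0\<bar>" for x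
    using L0 by (intro cayley_orbit_bounded[OF w period_window Q1 L1 _ C1]
      cayley_orbit_bounded[OF w period_window Q2 L2 _ C2]; simp)+
  then have "x2 - x1 \<le> 2 * (w * C0\<^sup>2 / \<bar>L0\<bar>) / w"
    using real_chord_le[OF chord] w by blast
  then have "x2 - x1 \<le> d" using w by (simp add: d_def)
  then have x12_window: "x1 \<in> {x0..x0 + T}" "x2 \<in> {x0..x0 + T}" using x12 T w by auto
  then have "x1 \<in> {a..b}" "x2 \<in> {a..b}" using window by auto
  then have "of_real w * (u2 x2 / u2' x2 - u1 x1 / u1' x1) = of_real w * of_real (x2 - x1)"
    using chord unfolding Q1[OF \<open>x1 \<in> {a..b}\<close>] Q2[OF \<open>x2 \<in> {a..b}\<close>]
    by (simp add: algebra_simps)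
  then have "u2 x2 / u2' x2 - u1 x1 / u1' x1 = of_real (x2 - x1)" using w by simp
  moreover have "L0 \<noteq> 0" using L0 by simp
  ultimately obtain p where "cmod p = 1" "linear_bridge u1 u1' u2 u2' x1 x2 p"
    using linear_bridge_of_ratio[OF L1[OF \<open>x1 \<in> {a..b}\<close>] L2[OF \<open>x2 \<in> {a..b}\<close>]]
    unfolding linear_bridge_def by blast
  then show ?thesis using x12(1) x12_window by blast
qed

lemma has_vector_derivative_if_le_off:
  fixes f g :: "real \<Rightarrow> 'a::real_normed_vector"
  assumes "x \<in> S" "x \<noteq> c"
    and "x < c \<Longrightarrow> (f has_vector_derivative D) (at x within S)"
    and "c < x \<Longrightarrow> (g has_vector_derivative D) (at x within S)"
  shows "((\<lambda>y. if y \<le> c then f y else g y) has_vector_derivative D) (at x within S)"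
proof (cases "x < c")
  case True
  show ?thesis
    by (rule has_vector_derivative_transform_within[OF assms(3)[OF True], of "c - x"])
       (use True assms(1) in \<open>auto simp: dist_real_def\<close>)
next
  case False
  then have "c < x" using assms(2) by simp
  show ?thesis
    by (rule has_vector_derivative_transform_within[OF assms(4)[OF \<open>c < x\<close>], of "x - c"])
       (use \<open>c < x\<close> assms(1) in \<open>auto simp: dist_real_def\<close>)
qed

lemma has_vector_derivative_if_le:
  fixes f g :: "real \<Rightarrow> 'a::real_normed_vector"
  assumes "x \<in> S"
    and f: "(f has_vector_derivative F) (at x within S)"
    and g: "(g has_vector_derivative G) (at x within S)"
    and "x = c \<Longrightarrow> f c = g c \<and> F = G"
  shows "((\<lambda>y. if y \<le> c then f y else g y) has_vector_derivative (if x \<le> c then F else G))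
           (at x within S)"
proof (cases "x = c")
  case True
  let ?h = "\<lambda>y. if y \<le> c then f y else g y"
  have fc: "(f has_vector_derivative F) (at x within S \<inter> {..c})"
    and gc: "(g has_vector_derivative F) (at x within S \<inter> {c..})"
    using has_vector_derivative_within_subset[OF f] has_vector_derivative_within_subset[OF g]
      assms(4)[OF True] True by auto
  have "(?h has_vector_derivative F) (at x within S \<inter> {..c})"
    by (rule has_vector_derivative_transform[OF _ _ fc]) (use True \<open>x \<in> S\<close> in auto)
  moreover have "(?h has_vector_derivative F) (at x within S \<inter> {c..})"
    by (rule has_vector_derivative_transform[OF _ _ gc]) (use True \<open>x \<in> S\<close> assms(4) in auto)
  ultimately have "(?h has_vector_derivative F) (at x within S \<inter> {..c} \<union> S \<inter> {c..})"
    unfolding has_vector_derivative_def has_derivative_within Lim_within_Un by blast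
  moreover have "S \<inter> {..c} \<union> S \<inter> {c..} = S" by auto
  ultimately show ?thesis using True by simp
next
  case False
  then show ?thesis using assms(1-3) by (intro has_vector_derivative_if_le_off) auto
qed

definition glued :: "(real \<Rightarrow> 'a) \<Rightarrow> (real \<Rightarrow> 'a) \<Rightarrow> (real \<Rightarrow> 'a) \<Rightarrow> real \<Rightarrow> real \<Rightarrow> real \<Rightarrow> 'a" where
  "glued f g h x1 x2 x = (if x \<le> x1 then f x else if x \<le> x2 then g x else h x)"

lemma has_vector_derivative_glued:
  fixes f g h :: "real \<Rightarrow> 'a::real_normed_vector"
  assumes "x \<in> S" "x1 \<le> x2"
    and "(f has_vector_derivative F) (at x within S)"
    and "(g has_vector_derivative G) (at x within S)"
    and "(h has_vector_derivative H) (at x within S)"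
    and "x = x1 \<Longrightarrow> f x1 = g x1 \<and> F = G" "x = x2 \<Longrightarrow> g x2 = h x2 \<and> G = H"
  shows "(glued f g h x1 x2 has_vector_derivative (if x \<le> x1 then F else if x \<le> x2 then G else H))
           (at x within S)"
  unfolding glued_def using assms
  by (intro has_vector_derivative_if_le has_vector_derivative_if_le) auto

lemma has_vector_derivative_glued_off:
  fixes f g h :: "real \<Rightarrow> 'a::real_normed_vector"
  assumes "x \<in> S" "x \<noteq> x1" "x \<noteq> x2"
    and "x < x1 \<Longrightarrow> (f has_vector_derivative D) (at x within S)"
    and "x1 < x \<Longrightarrow> x < x2 \<Longrightarrow> (g has_vector_derivative D) (at x within S)"
    and "x1 < x \<Longrightarrow> x2 < x \<Longrightarrow> (h has_vector_derivative D) (at x within S)"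
  shows "(glued f g h x1 x2 has_vector_derivative D) (at x within S)"
  unfolding glued_def using assms
  by (intro has_vector_derivative_if_le_off) (auto intro: has_vector_derivative_if_le_off)

lemma continuous_on_glued:
  fixes f g h :: "real \<Rightarrow> 'a::topological_space"
  assumes "continuous_on S f" "continuous_on S g" "continuous_on S h" "x1 \<le> x2"
    and "f x1 = g x1" "g x2 = h x2"
  shows "continuous_on S (glued f g h x1 x2)"
proof -
  have "continuous_on {x \<in> S. x1 \<le> x} (\<lambda>x. if x \<le> x2 then g x else h x)"
  proof (rule continuous_on_cases_le)
    show "continuous_on {x \<in> {x \<in> S. x1 \<le> x}. x \<le> x2} g"
      by (rule continuous_on_subset[OF assms(2)]) auto
    show "continuous_on {x \<in> {x \<in> S. x1 \<le> x}. x2 \<le> x} h"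
      by (rule continuous_on_subset[OF assms(3)]) auto
  qed (use assms(6) in \<open>auto intro: continuous_on_id\<close>)
  then show ?thesis
    unfolding glued_def
  proof (rule continuous_on_cases_le[rotated])
    show "continuous_on {x \<in> S. x \<le> x1} f"
      by (rule continuous_on_subset[OF assms(1)]) auto
  qed (use assms(4,5) in \<open>auto intro: continuous_on_id\<close>)
qed

lemma linear_bridge_glue:
  fixes \<omega> :: real and u1 u1' u2 u2' :: "real \<Rightarrow> complex"
  assumes u1: "harmonic_solution \<omega> {a..b} u1 u1'" and u2: "harmonic_solution \<omega> {a..b} u2 u2'"
    and x12: "x1 < x2" "x1 \<in> {a..b}" "x2 \<in> {a..b}"
    and bridge: "linear_bridge u1 u1' u2 u2' x1 x2 p"
  shows "\<exists>ut ut'. (\<forall>x\<in>{a..b}. (ut has_vector_derivative ut' x) (at x within {a..b})) \<and>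
           continuous_on {a..b} ut' \<and>
           (\<forall>x\<in>{a..b} - {x1, x2}.
              (ut' has_vector_derivative
                 - (of_real (\<omega>\<^sup>2 - (if x \<in> {x1..x2} then \<omega>\<^sup>2 else 0)) * ut x)) (at x within {a..b})) \<and>
           (\<forall>x\<in>{a..x1}. ut x = u1 x) \<and> (\<forall>x\<in>{x2..b}. ut x = p * u2 x)"
proof -
  have u1_d1: "(u1 has_vector_derivative u1' x) (at x within {a..b})"
    and u1_d2: "(u1' has_vector_derivative - (of_real (\<omega>\<^sup>2) * u1 x)) (at x within {a..b})"
    and u2: "(u2 has_vector_derivative u2' x) (at x within {a..b})"
      "(u2' has_vector_derivative - (of_real (\<omega>\<^sup>2) * u2 x)) (at x within {a..b})"
    if "x \<in> {a..b}" for x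
    using u1 u2 that by (auto simp: harmonic_solution_def)
  have u2_d1: "((\<lambda>x. p * u2 x) has_vector_derivative p * u2' x) (at x within {a..b})"
    and u2_d2: "((\<lambda>x. p * u2' x) has_vector_derivative p * - (of_real (\<omega>\<^sup>2) * u2 x)) (at x within {a..b})"
    if "x \<in> {a..b}" for x
    using has_vector_derivative_mult_right[OF u2(1)[OF that]]
      has_vector_derivative_mult_right[OF u2(2)[OF that]] by blast+
  define line where "line x = u1 x1 + of_real (x - x1) * u1' x1" for x
  define ut where "ut = glued u1 line (\<lambda>x. p * u2 x) x1 x2"
  define ut' where "ut' = glued u1' (\<lambda>_. u1' x1) (\<lambda>x. p * u2' x) x1 x2"
  have line: "(line has_vector_derivative u1' x1) (at x within S)" for x S
    unfolding line_def by (auto intro!: derivative_eq_intros)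
  have join: "line x2 = p * u2 x2" "u1' x1 = p * u2' x2"
    using bridge unfolding linear_bridge_def line_def by auto
  have "line x1 = u1 x1" by (simp add: line_def)
  have "(ut has_vector_derivative
           (if x \<le> x1 then u1' x else if x \<le> x2 then u1' x1 else p * u2' x)) (at x within {a..b})"
    if "x \<in> {a..b}" for x
    unfolding ut_def
    by (rule has_vector_derivative_glued[OF that _ u1_d1[OF that] line u2_d1[OF that]])
       (use x12(1) join \<open>line x1 = u1 x1\<close> in auto)
  then have "(ut has_vector_derivative ut' x) (at x within {a..b})" if "x \<in> {a..b}" for x
    using that by (simp add: ut'_def glued_def)
  moreover have "continuous_on {a..b} ut'"
    unfolding ut'_def using x12(1) join
    by (intro continuous_on_glued continuous_on_vector_derivative[OF u1_d2]
          continuous_on_vector_derivative[OF u2_d2] continuous_on_const) auto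
  moreover have "(ut' has_vector_derivative
                    - (of_real (\<omega>\<^sup>2 - (if x \<in> {x1..x2} then \<omega>\<^sup>2 else 0)) * ut x)) (at x within {a..b})"
    if x: "x \<in> {a..b} - {x1, x2}" for x
    unfolding ut'_def
  proof (rule has_vector_derivative_glued_off)
    show "(u1' has_vector_derivative - (of_real (\<omega>\<^sup>2 - (if x \<in> {x1..x2} then \<omega>\<^sup>2 else 0)) * ut x))
            (at x within {a..b})" if "x < x1"
      using u1_d2[of x] x that by (simp add: ut_def glued_def)
    show "((\<lambda>_. u1' x1) has_vector_derivative - (of_real (\<omega>\<^sup>2 - (if x \<in> {x1..x2} then \<omega>\<^sup>2 else 0)) * ut x))
            (at x within {a..b})" if "x1 < x" "x < x2"
      using that by simp
    show "((\<lambda>x. p * u2' x) has_vector_derivative - (of_real (\<omega>\<^sup>2 - (if x \<in> {x1..x2} then \<omega>\<^sup>2 else 0)) * ut x))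
            (at x within {a..b})" if "x1 < x" "x2 < x"
      using u2_d2[of x] x that by (simp add: ut_def glued_def mult.left_commute)
  qed (use x in auto)
  moreover have "\<forall>x\<in>{a..x1}. ut x = u1 x" "\<forall>x\<in>{x2..b}. ut x = p * u2 x"
    using x12(1) join by (auto simp: ut_def glued_def line_def)
  ultimately show ?thesis by blast
qed

lemma linear_bridge_exists:
  fixes \<omega> L0 C0 x0 :: real and u1 u1' u2 u2' :: "real \<Rightarrow> complex"
  defines "T \<equiv> 2 * pi / \<bar>\<omega>\<bar> + pi * C0\<^sup>2 / \<bar>L0\<bar>"
  assumes "\<omega> \<noteq> 0" and "L0 \<noteq> 0"
    and u1: "harmonic_solution \<omega> {a..b} u1 u1'" and u2: "harmonic_solution \<omega> {a..b} u2 u2'"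
    and L1: "\<And>x. x \<in> {a..b} \<Longrightarrow> Im (u1' x * cnj (u1 x)) = L0"
    and L2: "\<And>x. x \<in> {a..b} \<Longrightarrow> Im (u2' x * cnj (u2 x)) = L0"
    and bound: "\<And>x. x \<in> {a..b} \<Longrightarrow> cmod (u1 x) + cmod (u2 x) \<le> C0"
    and nonconst: "\<not> (\<exists>c. \<forall>x\<in>{a..b}. u1 x / u2 x = c)"
    and window: "{x0..x0 + T} \<subseteq> {a..b}"
  shows "\<exists>x1 x2 p. x1 < x2 \<and> x1 \<in> {x0..x0 + T} \<and> x2 \<in> {x0..x0 + T} \<and> cmod p = 1 \<and>
                   linear_bridge u1 u1' u2 u2' x1 x2 p"
proof (cases "L0 < 0")
  case True
  then show ?thesis using linear_bridge_exists_neg assms unfolding T_def by blast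
next
  case False
  have flux_cnj: "Im (cnj v' * cnj (cnj v)) = - Im (v' * cnj v)" for v v' :: complex
    by simp
  have L1': "Im (cnj (u1' x) * cnj (cnj (u1 x))) = - L0"
    and L2': "Im (cnj (u2' x) * cnj (cnj (u2 x))) = - L0" if "x \<in> {a..b}" for x
    unfolding flux_cnj L1[OF that] L2[OF that] by simp_all
  have nonconst': "\<not> (\<exists>c. \<forall>x\<in>{a..b}. cnj (u1 x) / cnj (u2 x) = c)"
  proof
    assume "\<exists>c. \<forall>x\<in>{a..b}. cnj (u1 x) / cnj (u2 x) = c"
    then obtain c where "\<forall>x\<in>{a..b}. u1 x / u2 x = cnj c"
      by (metis complex_cnj_cnj complex_cnj_divide)
    then show False using nonconst by blast
  qed
  have "- L0 < 0" using False \<open>L0 \<noteq> 0\<close> by simp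
  have bound': "cmod (cnj (u1 x)) + cmod (cnj (u2 x)) \<le> C0" if "x \<in> {a..b}" for x
    using bound[OF that] by simp
  have T: "T = 2 * pi / \<bar>\<omega>\<bar> + pi * C0\<^sup>2 / \<bar>- L0\<bar>" by (simp add: T_def)
  have "\<exists>x1 x2 p. x1 < x2 \<and> x1 \<in> {x0..x0 + T} \<and> x2 \<in> {x0..x0 + T} \<and> cmod p = 1 \<and>
          linear_bridge (\<lambda>x. cnj (u1 x)) (\<lambda>x. cnj (u1' x)) (\<lambda>x. cnj (u2 x)) (\<lambda>x. cnj (u2' x)) x1 x2 p"
    unfolding T
    by (rule linear_bridge_exists_neg[OF \<open>\<omega> \<noteq> 0\<close> \<open>- L0 < 0\<close> harmonic_solution_cnj[OF u1]
          harmonic_solution_cnj[OF u2] L1' L2' bound' nonconst' window[unfolded T]])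
  then obtain x1 x2 p where x12: "x1 < x2" "x1 \<in> {x0..x0 + T}" "x2 \<in> {x0..x0 + T}" "cmod p = 1"
    and "linear_bridge (\<lambda>x. cnj (u1 x)) (\<lambda>x. cnj (u1' x)) (\<lambda>x. cnj (u2 x)) (\<lambda>x. cnj (u2' x)) x1 x2 p"
    by blast
  then have "linear_bridge u1 u1' u2 u2' x1 x2 (cnj p)" using linear_bridge_cnj by fastforce
  moreover have "cmod (cnj p) = 1" using x12(4) by simp
  ultimately show ?thesis using x12(1-3) by blast
qed

lemma unit_complex_eq_exp:
  assumes "cmod p = 1"
  shows "\<exists>\<theta>\<in>{0..<2 * pi}. exp (\<i> * of_real \<theta>) = p"
proof -
  define \<theta> where "\<theta> = (if 0 \<le> Arg p then Arg p else Arg p + 2 * pi)"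
  have "\<theta> \<in> {0..<2 * pi}" using Arg_bounded[of p] by (auto simp: \<theta>_def)
  moreover have "p \<noteq> 0" using assms by auto
  then have "cis (Arg p) = p" using cis_Arg[of p] assms by (simp add: sgn_div_norm)
  then have "exp (\<i> * of_real \<theta>) = p" by (simp add: \<theta>_def cis_mult[symmetric] flip: cis_conv_exp)
  ultimately show ?thesis by blast
qed

theorem lemma4p3:
  fixes \<omega> L0 C0 a b x0 :: real
    and u1 u1' u2 u2' :: "real \<Rightarrow> complex"
  defines "T \<equiv> 2 * pi / \<bar>\<omega>\<bar> + pi * C0\<^sup>2 / \<bar>L0\<bar>"
  assumes "\<omega> \<noteq> 0" and "L0 \<noteq> 0" and "C0 > 0" and "a < b"
    and "b - a > T + 2"
    and u1_d1: "\<And>x. x \<in> {a..b} \<Longrightarrow> (u1 has_vector_derivative u1' x) (at x within {a..b})"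
    and u1_d2: "\<And>x. x \<in> {a..b} \<Longrightarrow>
                  (u1' has_vector_derivative (- (complex_of_real (\<omega>\<^sup>2) * u1 x))) (at x within {a..b})"
    and u2_d1: "\<And>x. x \<in> {a..b} \<Longrightarrow> (u2 has_vector_derivative u2' x) (at x within {a..b})"
    and u2_d2: "\<And>x. x \<in> {a..b} \<Longrightarrow>
                  (u2' has_vector_derivative (- (complex_of_real (\<omega>\<^sup>2) * u2 x))) (at x within {a..b})"
    and L1: "\<And>x. x \<in> {a..b} \<Longrightarrow> Im (u1' x * cnj (u1 x)) = L0"
    and L2: "\<And>x. x \<in> {a..b} \<Longrightarrow> Im (u2' x * cnj (u2 x)) = L0"
    and bound: "\<And>x. x \<in> {a..b} \<Longrightarrow> cmod (u1 x) + cmod (u2 x) \<le> C0"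
    and nonconst: "\<not> (\<exists>c. \<forall>x\<in>{a..b}. u1 x / u2 x = c)"
    and x0: "x0 \<in> {a..b}" and sub: "{x0..x0 + T} \<subseteq> {a<..<b}"
  shows "\<exists>\<theta>2 x1 x2 ut ut'.
           \<theta>2 \<in> {0..<2*pi} \<and> x1 < x2 \<and> x1 \<in> {x0..x0 + T} \<and> x2 \<in> {x0..x0 + T} \<and>
           (\<forall>x\<in>{a..b}. (ut has_vector_derivative ut' x) (at x within {a..b})) \<and>
           continuous_on {a..b} ut' \<and>
           (\<forall>x\<in>{a..b} - {x1, x2}.
              (ut' has_vector_derivative
                 (- (complex_of_real (\<omega>\<^sup>2 - (if x \<in> {x1..x2} then \<omega>\<^sup>2 else 0)) * ut x)))
                (at x within {a..b})) \<and>
           (\<forall>x\<in>{a..x1}. ut x = u1 x) \<and>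
           (\<forall>x\<in>{x2..b}. ut x = exp (\<i> * complex_of_real \<theta>2) * u2 x)"
proof -
  have u1: "harmonic_solution \<omega> {a..b} u1 u1'" and u2: "harmonic_solution \<omega> {a..b} u2 u2'"
    using u1_d1 u1_d2 u2_d1 u2_d2 by (simp_all add: harmonic_solution_def)
  have window: "{x0..x0 + T} \<subseteq> {a..b}" using sub by (rule order_trans) auto
  obtain x1 x2 p where x12: "x1 < x2" "x1 \<in> {x0..x0 + T}" "x2 \<in> {x0..x0 + T}"
    and p: "cmod p = 1" and bridge: "linear_bridge u1 u1' u2 u2' x1 x2 p"
    using linear_bridge_exists[OF \<open>\<omega> \<noteq> 0\<close> \<open>L0 \<noteq> 0\<close> u1 u2 L1 L2 bound nonconst window[unfolded T_def]]
    unfolding T_def by blast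
  obtain \<theta> where "\<theta> \<in> {0..<2 * pi}" "exp (\<i> * of_real \<theta>) = p"
    using unit_complex_eq_exp[OF p] by blast
  moreover have "x1 \<in> {a..b}" "x2 \<in> {a..b}" using x12 window by auto
  ultimately show ?thesis
    using linear_bridge_glue[OF u1 u2 x12(1) _ _ bridge] x12 by blast
qed

end
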